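(* Let $n\ge2$, let $\mathcal{P}$ be a probability distribution on $\mathcal{Z}=\mathcal{X}\times\mathcal{Y}$, let $h:\mathcal{Z}^{n-1}\times\mathcal{X}\to\mathcal{R}$ be a possibly stochastic prediction function, and let $\ell:\mathcal{R}\times\mathcal{Y}\to[0,1]$ be a (measurable) loss. Then \[ \mathrm{gen}(h)\le\frac{c_n}{\sqrt2}\,\mathbb{E}_{z^n\sim\mathcal{P}^n}\sqrt{\mathrm{floo\text{-}CMI}(h,z^n)},\qquad c_n=\frac{n}{n-1}. \]
   Context: $h(z,x)$ is the (possibly random) prediction on input $x$ after training on $z$; its randomness is independent of the data and of $U$ below. For a training set $z^{m}=((x_1,y_1),\dots,(x_m,y_m))$, the true loss is $\mathcal{L}(h,z^m)=\mathbb{E}_{(x',y')\sim\mathcal{P}}[\ell(h(z^m,x'),y')]$ and the empirical loss is $\widehat{\mathcal{L}}(h,z^m)=\frac1m\sum_{i=1}^m\ell(h(z^m,x_i),y_i)$. The generalization gap is $\mathrm{gen}(h)=\big|\mathbb{E}\big[\widehat{\mathcal{L}}(h,Z^{n-1})-\mathcal{L}(h,Z^{n-1})\big]\big|$ with $Z^{n-1}\sim\mathcal{P}^{n-1}$ (expectation also over the randomness of $h$). For $z^n\in\mathcal{Z}^n$ with $z_i=(x_i,y_i)$, let $x^n=(x_1,\dots,x_n)$, let $z^{n-1}_{-u}$ be $z^n$ with $z_u$ deleted, and let $h(z^{n-1}_{-u},x^n)=(h(z^{n-1}_{-u},x_1),\dots,h(z^{n-1}_{-u},x_n))$. With $U$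 uniform on $[n]$, $\mathrm{floo\text{-}CMI}(h,z^n)=I\big(h(z^{n-1}_{-U},x^n);U\mid Z^n=z^n\big)$. *)

theory Defs
  imports "HOL-Probability.Probability"
begin

text \<open>A training set of size m is an (extensional) function on {..<m}
  with values in Z = X \<times> Y. The possibly stochastic predictor is
  h w z x, where the internal randomness w is drawn from a probability
  measure MW independent of everything else.\<close>

definition del_idx :: "nat \<Rightarrow> nat \<Rightarrow> (nat \<Rightarrow> 'z) \<Rightarrow> nat \<Rightarrow> 'z" where
  "del_idx n u z = (\<lambda>i. if i < n - 1 then z (if i < u then i else Suc i) else undefined)"

text \<open>floo-CMI(h, z^n) = I(h(z^{n-1}_{-U}, x^n); U | Z^n = z^n), in nats,
  on the probability space MW \<times> Uniform{..<n}.\<close>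
definition floo_CMI ::
  "'w measure \<Rightarrow> 'r measure \<Rightarrow> ('w \<Rightarrow> (nat \<Rightarrow> 'x \<times> 'y) \<Rightarrow> 'x \<Rightarrow> 'r) \<Rightarrow> nat
     \<Rightarrow> (nat \<Rightarrow> 'x \<times> 'y) \<Rightarrow> real" where
  "floo_CMI MW MR h n z =
     prob_space.mutual_information (MW \<Otimes>\<^sub>M uniform_count_measure {..<n}) (exp 1)
       (PiM {..<n} (\<lambda>_. MR)) (count_space {..<n})
       (\<lambda>(w, u). \<lambda>i\<in>{..<n}. h w (del_idx n u z) (fst (z i))) snd"

definition emp_loss ::
  "('r \<Rightarrow> 'y \<Rightarrow> real) \<Rightarrow> ('w \<Rightarrow> (nat \<Rightarrow> 'x \<times> 'y) \<Rightarrow> 'x \<Rightarrow> 'r) \<Rightarrow> nat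
     \<Rightarrow> 'w \<Rightarrow> (nat \<Rightarrow> 'x \<times> 'y) \<Rightarrow> real" where
  "emp_loss loss h m w z = (\<Sum>i<m. loss (h w z (fst (z i))) (snd (z i))) / real m"

definition true_loss ::
  "('x \<times> 'y) measure \<Rightarrow> ('r \<Rightarrow> 'y \<Rightarrow> real) \<Rightarrow> ('w \<Rightarrow> (nat \<Rightarrow> 'x \<times> 'y) \<Rightarrow> 'x \<Rightarrow> 'r)
     \<Rightarrow> 'w \<Rightarrow> (nat \<Rightarrow> 'x \<times> 'y) \<Rightarrow> real" where
  "true_loss P loss h w z = (\<integral>p. loss (h w z (fst p)) (snd p) \<partial>P)"

definition gen_gap ::
  "'w measure \<Rightarrow> ('x \<times> 'y) measure \<Rightarrow> ('r \<Rightarrow> 'y \<Rightarrow> real)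
     \<Rightarrow> ('w \<Rightarrow> (nat \<Rightarrow> 'x \<times> 'y) \<Rightarrow> 'x \<Rightarrow> 'r) \<Rightarrow> nat \<Rightarrow> real" where
  "gen_gap MW P loss h m =
     \<bar>\<integral>(w, z). emp_loss loss h m w z - true_loss P loss h w z \<partial>(MW \<Otimes>\<^sub>M PiM {..<m} (\<lambda>_. P))\<bar>"

end

theory Submission
  imports Defs
begin

text \<open>Fix the full sample \<open>z\<^sup>n\<close> and let \<open>U\<close> be uniform on \<open>{..<n}\<close>, independent of the internal
  randomness \<open>w\<close>. Let \<open>F\<close> be the vector of predictions, on all \<open>n\<close> inputs, of the predictor trained
  without \<open>z\<^sub>U\<close>. The mean of \<open>loss (F\<^sub>U) y\<^sub>U\<close> under the joint law of \<open>(F, U)\<close> is the leave-one-out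
  test loss; under the product of the marginals it is the mean loss over all \<open>n\<close> points. Their
  difference is \<open>(n - 1) / n\<close> times the leave-one-out gap (test loss minus training loss, averaged over
  the deleted index). As \<open>U\<close> is uniform, the joint law is at most \<open>n\<close> times the product, so it has a
  bounded density, and the Donsker--Varadhan formula combined with Hoeffding's lemma bounds the
  difference by \<open>sqrt (I(F; U) / 2)\<close>. Finally, exchangeability of \<open>P\<^sup>n\<close> identifies the expected
  leave-one-out gap with the generalization gap of training on \<open>n - 1\<close> points.\<close>

section \<open>Entropy inequalities\<close>

lemma gibbs_pointwise:
  fixes t s :: real
  assumes "0 \<le> t" "0 < s"
  shows "t * ln s + t - s \<le> t * ln t"
proof (cases "t = 0")
  case False
  then have t: "t > 0" using assms by simp
  have "t * ln (s / t) \<le> t * (s / t - 1)"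
    using t assms by (intro mult_left_mono ln_le_minus_one) auto
  also have "\<dots> = s - t" using t by (simp add: field_simps)
  finally show ?thesis using t assms by (simp add: ln_div algebra_simps)
qed (use assms in simp)

lemma abs_mult_ln_le:
  fixes x B :: real
  assumes "0 \<le> x" "x \<le> B"
  shows "\<bar>x * ln x\<bar> \<le> 1 + B * B"
proof (cases "x = 0")
  case False
  then have x: "x > 0" using assms by simp
  have "x * ln x \<le> x * (x - 1)"
    using x by (intro mult_left_mono ln_le_minus_one) auto
  moreover have "x - 1 \<le> x * ln x"
    using gibbs_pointwise[of x 1] x by simp
  moreover have "x * x \<le> B * B" using assms by (intro mult_mono) auto
  moreover have "x * (x - 1) = x * x - x" by (simp add: algebra_simps)
  moreover have "0 \<le> B * B" by simp
  ultimately show ?thesis using assms unfolding abs_le_iff by linarith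
qed simp

lemma (in prob_space) abs_integral_le:
  fixes f :: "'a \<Rightarrow> real"
  assumes "\<And>x. x \<in> space M \<Longrightarrow> \<bar>f x\<bar> \<le> B"
  shows "\<bar>\<integral>x. f x \<partial>M\<bar> \<le> B"
proof -
  obtain x where "x \<in> space M" using not_empty by blast
  then have "0 \<le> B" using assms[of x] by linarith
  have "\<bar>\<integral>x. f x \<partial>M\<bar> \<le> (\<integral>x. \<bar>f x\<bar> \<partial>M)"
    by (rule integral_abs_bound)
  also have "\<dots> \<le> (\<integral>x. B \<partial>M)"
    using assms \<open>0 \<le> B\<close> by (intro integral_mono' integrable_const) auto
  finally show ?thesis by (simp add: prob_space)
qed

lemma (in finite_measure) integrable_bounded:
  fixes f :: "'a \<Rightarrow> real"
  assumes "f \<in> borel_measurable M" "\<And>x. x \<in> space M \<Longrightarrow> \<bar>f x\<bar> \<le> B"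
  shows "integrable M f"
  using assms by (intro integrable_const_bound[where B=B]) (auto intro: AE_I2)

lemma (in prob_space) donsker_varadhan:
  fixes f G :: "'a \<Rightarrow> real"
  assumes [measurable]: "f \<in> borel_measurable M" "G \<in> borel_measurable M"
    and f_bounds: "\<And>x. x \<in> space M \<Longrightarrow> 0 \<le> f x \<and> f x \<le> B"
    and G_bound: "\<And>x. x \<in> space M \<Longrightarrow> \<bar>G x\<bar> \<le> C"
    and f_normalized: "(\<integral>x. f x \<partial>M) = 1"
  shows "(\<integral>x. f x * G x \<partial>M) - ln (\<integral>x. exp (G x) \<partial>M) \<le> (\<integral>x. f x * ln (f x) \<partial>M)"
proof -
  define Z where "Z = (\<integral>x. exp (G x) \<partial>M)"
  have int_exp: "integrable M (\<lambda>x. exp (G x))"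
    by (rule integrable_bounded[where B="exp C"]) (auto dest!: G_bound)
  have "exp (- C) \<le> Z"
    unfolding Z_def by (intro integral_ge_const int_exp AE_I2) (auto dest!: G_bound)
  then have Z_pos: "Z > 0" by (smt (verit) exp_gt_zero)
  have int_fG: "integrable M (\<lambda>x. f x * G x)"
    by (rule integrable_bounded[where B="\<bar>B\<bar> * C"])
      (auto simp: abs_mult intro!: mult_mono dest: f_bounds G_bound)
  have int_f: "integrable M f"
    by (rule integrable_bounded[where B="\<bar>B\<bar>"]) (auto dest!: f_bounds)
  have int_flnf: "integrable M (\<lambda>x. f x * ln (f x))"
    by (rule integrable_bounded[where B="1 + B * B"]) (auto intro!: abs_mult_ln_le dest: f_bounds)
  have "f x * (G x - ln Z) + f x - exp (G x) / Z \<le> f x * ln (f x)" if "x \<in> space M" for x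
    using gibbs_pointwise[of "f x" "exp (G x) / Z"] f_bounds[OF that] Z_pos by (simp add: ln_div)
  then have "(\<integral>x. f x * (G x - ln Z) + f x - exp (G x) / Z \<partial>M) \<le> (\<integral>x. f x * ln (f x) \<partial>M)"
    using int_flnf int_fG int_f int_exp by (intro integral_mono) (auto simp: algebra_simps)
  also have "(\<integral>x. f x * (G x - ln Z) + f x - exp (G x) / Z \<partial>M)
     = (\<integral>x. f x * G x \<partial>M) - ln Z * (\<integral>x. f x \<partial>M) + (\<integral>x. f x \<partial>M) - Z / Z"
    using int_fG int_f int_exp unfolding Z_def by (simp add: algebra_simps)
  finally show ?thesis using f_normalized Z_pos unfolding Z_def by simp
qed

lemma (in prob_space) abs_sub_integral_le_one:
  fixes g :: "'a \<Rightarrow> real"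
  assumes "g \<in> borel_measurable M" and g_bounds: "\<And>x. x \<in> space M \<Longrightarrow> lo \<le> g x \<and> g x \<le> lo + 1"
    and x: "x \<in> space M"
  shows "\<bar>g x - (\<integral>x. g x \<partial>M)\<bar> \<le> 1"
proof -
  have "lo \<le> (\<integral>x. g x \<partial>M) \<and> (\<integral>x. g x \<partial>M) \<le> lo + 1"
    using assms by (intro conjI integral_ge_const integral_le_const integrable_bounded[where B="\<bar>lo\<bar> + 1"] AE_I2)
      (auto dest!: g_bounds)
  then show ?thesis using g_bounds[OF x] by (simp add: abs_le_iff)
qed

lemma (in prob_space) hoeffding_ln_integral_exp_le:
  fixes g :: "'a \<Rightarrow> real"
  assumes g_meas [measurable]: "g \<in> borel_measurable M"
    and g_bounds: "\<And>x. x \<in> space M \<Longrightarrow> lo \<le> g x \<and> g x \<le> lo + 1" and l_pos: "l > 0"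
  shows "ln (\<integral>x. exp (l * (g x - (\<integral>x. g x \<partial>M))) \<partial>M) \<le> l\<^sup>2 / 8"
proof -
  interpret g: interval_bounded_random_variable M g lo "lo + 1"
    by unfold_locales (auto intro!: AE_I2 dest: g_bounds)
  define E where "E = (\<integral>x. g x \<partial>M)"
  have tilt_bound: "\<bar>l * (g x - E)\<bar> \<le> l" if "x \<in> space M" for x
    using abs_sub_integral_le_one[OF g_meas g_bounds that] l_pos by (simp add: E_def abs_mult)
  have int_tilt: "integrable M (\<lambda>x. exp (l * (g x - E)))"
    by (rule integrable_bounded[where B="exp l"]) (auto dest!: tilt_bound)
  have "ennreal (\<integral>x. exp (l * (g x - E)) \<partial>M) = (\<integral>\<^sup>+x. exp (l * (g x - E)) \<partial>M)"
    by (rule nn_integral_eq_integral[symmetric]) (auto intro: int_tilt)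
  also have "\<dots> \<le> ennreal (exp (l\<^sup>2 / 8))"
    using g.Hoeffdings_lemma_nn_integral[OF l_pos] unfolding E_def by simp
  finally have mgf_le: "(\<integral>x. exp (l * (g x - E)) \<partial>M) \<le> exp (l\<^sup>2 / 8)"
    by (subst (asm) ennreal_le_iff) auto
  have "exp (- l) \<le> (\<integral>x. exp (l * (g x - E)) \<partial>M)"
    by (intro integral_ge_const int_tilt AE_I2) (auto dest!: tilt_bound)
  then have "0 < (\<integral>x. exp (l * (g x - E)) \<partial>M)" by (smt (verit) exp_gt_zero)
  with mgf_le show ?thesis unfolding E_def by (metis ln_exp ln_le_cancel_iff exp_gt_zero)
qed

lemma (in prob_space) pinsker_density:
  fixes f g :: "'a \<Rightarrow> real"
  assumes [measurable]: "f \<in> borel_measurable M" and g_meas [measurable]: "g \<in> borel_measurable M"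
    and f_bounds: "\<And>x. x \<in> space M \<Longrightarrow> 0 \<le> f x \<and> f x \<le> B"
    and g_bounds: "\<And>x. x \<in> space M \<Longrightarrow> lo \<le> g x \<and> g x \<le> lo + 1"
    and f_normalized: "(\<integral>x. f x \<partial>M) = 1"
  shows "(\<integral>x. f x * g x \<partial>M) - (\<integral>x. g x \<partial>M) \<le> sqrt ((\<integral>x. f x * ln (f x) \<partial>M) / 2)"
proof -
  define KL where "KL = (\<integral>x. f x * ln (f x) \<partial>M)"
  define D where "D = (\<integral>x. f x * g x \<partial>M) - (\<integral>x. g x \<partial>M)"
  have "(\<integral>x. f x * 0 \<partial>M) - ln (\<integral>x. exp 0 \<partial>M) \<le> KL"
    unfolding KL_def by (rule donsker_varadhan[OF _ _ f_bounds _ f_normalized, where C=0]) auto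
  then have KL_nonneg: "KL \<ge> 0" by (simp add: prob_space)
  have "D \<le> sqrt (KL / 2)"
  proof (cases "D \<le> 0")
    case True
    then show ?thesis using KL_nonneg real_sqrt_ge_zero[of "KL / 2"] by linarith
  next
    case False
    \<comment> \<open>Donsker--Varadhan with the tilt \<open>l (g - E g)\<close> and Hoeffding's lemma give
      \<open>l D - l\<^sup>2 / 8 \<le> KL\<close>; the choice \<open>l = 4 D\<close> is optimal.\<close>
    define l where "l = 4 * D"
    have l_pos: "l > 0" using False unfolding l_def by simp
    define E where "E = (\<integral>x. g x \<partial>M)"
    have tilt_bound: "\<bar>l * (g x - E)\<bar> \<le> l" if "x \<in> space M" for x
      using abs_sub_integral_le_one[OF g_meas g_bounds that] l_pos by (simp add: E_def abs_mult)
    have int_fg: "integrable M (\<lambda>x. f x * g x)"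
      by (rule integrable_bounded[where B="\<bar>B\<bar> * (\<bar>lo\<bar> + 1)"])
        (auto simp: abs_mult intro!: mult_mono dest: f_bounds g_bounds)
    have int_f: "integrable M f"
      by (rule integrable_bounded[where B="\<bar>B\<bar>"]) (auto dest!: f_bounds)
    have "(\<integral>x. f x * (l * (g x - E)) \<partial>M) = l * ((\<integral>x. f x * g x \<partial>M) - E * (\<integral>x. f x \<partial>M))"
      using int_fg int_f by (simp add: algebra_simps)
    also have "\<dots> = l * D" using f_normalized unfolding D_def E_def by simp
    moreover have "(\<integral>x. f x * (l * (g x - E)) \<partial>M) - ln (\<integral>x. exp (l * (g x - E)) \<partial>M) \<le> KL"
      unfolding KL_def by (rule donsker_varadhan[OF _ _ f_bounds tilt_bound f_normalized]) simp_all
    ultimately have "l * D - l\<^sup>2 / 8 \<le> KL"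
      using hoeffding_ln_integral_exp_le[OF g_meas g_bounds l_pos] unfolding E_def by simp
    then have "2 * D\<^sup>2 \<le> KL" unfolding l_def by (simp add: power2_eq_square)
    then have "D\<^sup>2 \<le> KL / 2" by simp
    then show ?thesis by (rule real_le_rsqrt)
  qed
  then show ?thesis unfolding D_def KL_def .
qed

lemma (in prob_space) AE_density_le_of_dominated:
  assumes [measurable]: "F \<in> borel_measurable M" and N_eq: "density M F = N"
    and dominated: "\<And>A. A \<in> sets M \<Longrightarrow> emeasure N A \<le> ennreal c * emeasure M A"
  shows "AE x in M. F x \<le> ennreal c"
proof (rule ccontr)
  assume not_AE: "\<not> (AE x in M. F x \<le> ennreal c)"
  define A where "A = {x \<in> space M. ennreal c < F x}"
  have A[measurable]: "A \<in> sets M" unfolding A_def by measurable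
  have "(\<integral>\<^sup>+x. ennreal c * indicator A x \<partial>M) < (\<integral>\<^sup>+x. F x * indicator A x \<partial>M)"
  proof (rule nn_integral_less)
    show "(\<integral>\<^sup>+x. ennreal c * indicator A x \<partial>M) \<noteq> \<infinity>"
      by (simp add: nn_integral_cmult_indicator ennreal_mult_eq_top_iff emeasure_space_1)
    show "AE x in M. ennreal c * indicator A x \<le> F x * indicator A x"
      by (intro AE_I2) (auto simp: A_def indicator_def less_imp_le)
    show "\<not> (AE x in M. F x * indicator A x \<le> ennreal c * indicator A x)"
    proof
      assume "AE x in M. F x * indicator A x \<le> ennreal c * indicator A x"
      from this AE_space have "AE x in M. F x \<le> ennreal c"
      proof eventually_elim
        case (elim x)
        then show ?case by (cases "ennreal c < F x") (auto simp: A_def indicator_def)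
      qed
      with not_AE show False by simp
    qed
  qed auto
  also have "\<dots> = emeasure N A" by (simp flip: N_eq add: emeasure_density)
  also have "\<dots> \<le> ennreal c * emeasure M A" by (rule dominated[OF A])
  also have "\<dots> = (\<integral>\<^sup>+x. ennreal c * indicator A x \<partial>M)" by (simp add: nn_integral_cmult_indicator)
  finally show False by simp
qed

lemma (in prob_space) dominated_prob_space_bounded_density:
  assumes N: "prob_space N" "sets N = sets M"
    and dominated: "\<And>A. A \<in> sets M \<Longrightarrow> emeasure N A \<le> ennreal c * emeasure M A"
    and "0 \<le> c"
  obtains f where "f \<in> borel_measurable M" "\<And>x. 0 \<le> f x \<and> f x \<le> c"
    "N = density M (\<lambda>x. ennreal (f x))"
proof -
  have "absolutely_continuous M N"
    unfolding absolutely_continuous_def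
  proof
    fix A assume "A \<in> null_sets M"
    then show "A \<in> null_sets N" using dominated[of A] N by (auto simp: null_sets_def)
  qed
  define F where "F = RN_deriv M N"
  have [measurable]: "F \<in> borel_measurable M" unfolding F_def by simp
  have N_eq: "density M F = N"
    unfolding F_def by (rule density_RN_deriv[OF \<open>absolutely_continuous M N\<close> N(2)])
  \<comment> \<open>The cut-off at \<open>c\<close> only changes the density on a null set, and \<open>enn2real\<close> is harmless below \<open>\<infinity>\<close>.\<close>
  have "AE x in M. F x \<le> ennreal c"
    by (rule AE_density_le_of_dominated[OF _ N_eq dominated]) simp
  then have "AE x in M. F x = ennreal (min c (enn2real (F x)))"
  proof eventually_elim
    case (elim x)
    then show ?case using \<open>0 \<le> c\<close> by (cases "F x" rule: ennreal_cases) (auto simp: min_def top_unique)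
  qed
  then have "N = density M (\<lambda>x. ennreal (min c (enn2real (F x))))"
    by (subst N_eq[symmetric]) (intro density_cong; auto)
  moreover have "(\<lambda>x. min c (enn2real (F x))) \<in> borel_measurable M" by measurable
  ultimately show ?thesis
    using \<open>0 \<le> c\<close> by (intro that[of "\<lambda>x. min c (enn2real (F x))"]) auto
qed

lemma (in prob_space) KL_divergence_density_ln:
  assumes [measurable]: "f \<in> borel_measurable M" and "\<And>x. 0 \<le> f x"
  shows "KL_divergence (exp 1) M (density M (\<lambda>x. ennreal (f x))) = (\<integral>x. f x * ln (f x) \<partial>M)"
  using assms by (subst KL_density) (auto simp: log_def)

lemma (in prob_space) abs_KL_divergence_dominated_le:
  assumes "prob_space N" "sets N = sets M"
    and "\<And>A. A \<in> sets M \<Longrightarrow> emeasure N A \<le> ennreal c * emeasure M A" "0 \<le> c"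
  shows "\<bar>KL_divergence (exp 1) M N\<bar> \<le> 1 + c * c"
proof -
  obtain f where [measurable]: "f \<in> borel_measurable M" and f: "\<And>x. 0 \<le> f x \<and> f x \<le> c"
    and N_eq: "N = density M (\<lambda>x. ennreal (f x))"
    using dominated_prob_space_bounded_density[OF assms] by blast
  have "\<bar>\<integral>x. f x * ln (f x) \<partial>M\<bar> \<le> 1 + c * c"
    using f by (intro abs_integral_le abs_mult_ln_le) auto
  then show ?thesis unfolding N_eq using f by (simp add: KL_divergence_density_ln)
qed

lemma (in prob_space) pinsker_dominated:
  assumes N: "prob_space N" "sets N = sets M"
    and dominated: "\<And>A. A \<in> sets M \<Longrightarrow> emeasure N A \<le> ennreal c * emeasure M A" "0 \<le> c"
    and [measurable]: "g \<in> borel_measurable M"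
    and g: "\<And>x. x \<in> space M \<Longrightarrow> 0 \<le> g x \<and> g x \<le> 1"
  shows "\<bar>(\<integral>x. g x \<partial>N) - (\<integral>x. g x \<partial>M)\<bar> \<le> sqrt (KL_divergence (exp 1) M N / 2)"
proof -
  obtain f where [measurable]: "f \<in> borel_measurable M" and f: "\<And>x. 0 \<le> f x \<and> f x \<le> c"
    and N_eq: "N = density M (\<lambda>x. ennreal (f x))"
    using dominated_prob_space_bounded_density[OF N dominated] by blast
  have integral_N: "(\<integral>x. u x \<partial>N) = (\<integral>x. f x * u x \<partial>M)" if [measurable]: "u \<in> borel_measurable M"
    for u :: "'a \<Rightarrow> real"
    unfolding N_eq using f by (simp add: integral_density)
  have "(\<integral>x. f x \<partial>M) = 1"
    using integral_N[of "\<lambda>_. 1"] prob_space.prob_space[OF N(1)] by simp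
  then have "(\<integral>x. f x * g x \<partial>M) - (\<integral>x. g x \<partial>M) \<le> sqrt ((\<integral>x. f x * ln (f x) \<partial>M) / 2)"
    and "(\<integral>x. f x * - g x \<partial>M) - (\<integral>x. - g x \<partial>M) \<le> sqrt ((\<integral>x. f x * ln (f x) \<partial>M) / 2)"
    using f g by (intro pinsker_density[where lo=0 and B=c] pinsker_density[where lo="-1" and B=c]; simp)+
  moreover have "KL_divergence (exp 1) M N = (\<integral>x. f x * ln (f x) \<partial>M)"
    unfolding N_eq using f by (simp add: KL_divergence_density_ln)
  ultimately show ?thesis by (simp add: integral_N)
qed

section \<open>A uniformly random index\<close>

lemma measurable_pair_uniform_count_measure:
  assumes "finite A" "\<And>u. u \<in> A \<Longrightarrow> (\<lambda>w. f (w, u)) \<in> M \<rightarrow>\<^sub>M K"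
  shows "f \<in> M \<Otimes>\<^sub>M count_space A \<rightarrow>\<^sub>M K" "f \<in> M \<Otimes>\<^sub>M uniform_count_measure A \<rightarrow>\<^sub>M K"
proof -
  have "(\<lambda>(u, w). f (w, u)) \<in> count_space A \<Otimes>\<^sub>M M \<rightarrow>\<^sub>M K"
    using assms by (intro measurable_pair_measure_countable1) (auto intro: countable_finite)
  then show f_meas: "f \<in> M \<Otimes>\<^sub>M count_space A \<rightarrow>\<^sub>M K"
    by (subst (asm) measurable_pair_swap_iff) (simp add: case_prod_beta')
  have "sets (M \<Otimes>\<^sub>M uniform_count_measure A) = sets (M \<Otimes>\<^sub>M count_space A)"
    by (intro sets_pair_measure_cong refl sets_uniform_count_measure_count_space)
  then show "f \<in> M \<Otimes>\<^sub>M uniform_count_measure A \<rightarrow>\<^sub>M K"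
    using f_meas by (simp add: measurable_def space_pair_measure space_uniform_count_measure)
qed

lemma nn_integral_pair_uniform_count_measure:
  fixes n :: nat
  assumes "prob_space MW" "0 < n"
    and "\<psi> \<in> borel_measurable (MW \<Otimes>\<^sub>M uniform_count_measure {..<n})"
  shows "(\<integral>\<^sup>+s. \<psi> s \<partial>(MW \<Otimes>\<^sub>M uniform_count_measure {..<n}))
    = (\<integral>\<^sup>+w. (\<Sum>u<n. ennreal (1 / n) * \<psi> (w, u)) \<partial>MW)"
proof -
  interpret U: prob_space "uniform_count_measure {..<n}"
    using assms(2) by (intro prob_space_uniform_count_measure) auto
  show ?thesis
    using U.nn_integral_fst[OF assms(3)]
    by (simp add: uniform_count_measure_def nn_integral_point_measure_finite)
qed

lemma integral_pair_uniform_count_measure: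
  fixes \<phi> :: "'w \<times> nat \<Rightarrow> real" and n :: nat
  assumes "prob_space MW" "0 < n"
    and \<phi>_meas: "\<And>u. u < n \<Longrightarrow> (\<lambda>w. \<phi> (w, u)) \<in> borel_measurable MW"
    and \<phi>_bound: "\<And>w u. \<bar>\<phi> (w, u)\<bar> \<le> B"
  shows "(\<integral>s. \<phi> s \<partial>(MW \<Otimes>\<^sub>M uniform_count_measure {..<n})) = (\<Sum>u<n. \<integral>w. \<phi> (w, u) \<partial>MW) / n"
proof -
  interpret W: prob_space MW by fact
  interpret U: prob_space "uniform_count_measure {..<n}"
    using assms(2) by (intro prob_space_uniform_count_measure) auto
  interpret pair_prob_space MW "uniform_count_measure {..<n}" ..
  have "integrable (MW \<Otimes>\<^sub>M uniform_count_measure {..<n}) \<phi>"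
    using \<phi>_meas \<phi>_bound by (intro integrable_bounded measurable_pair_uniform_count_measure) auto
  then have "(\<integral>s. \<phi> s \<partial>(MW \<Otimes>\<^sub>M uniform_count_measure {..<n}))
      = (\<integral>w. (\<Sum>u<n. \<phi> (w, u)) / n \<partial>MW)"
    by (simp flip: integral_fst' add: integral_uniform_count_measure)
  also have "\<dots> = (\<Sum>u<n. \<integral>w. \<phi> (w, u) \<partial>MW) / n"
    using \<phi>_meas \<phi>_bound unfolding integral_divide_zero
    by (subst Bochner_Integration.integral_sum[where f="\<lambda>u w. \<phi> (w, u)"])
      (auto intro!: W.integrable_bounded)
  finally show ?thesis .
qed

locale uniform_index_channel =
  fixes MW :: "'w measure" and T :: "'t measure" and n :: nat and X :: "'w \<Rightarrow> nat \<Rightarrow> 't"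
  assumes prob_space_MW: "prob_space MW" and n_pos: "0 < n"
    and measurable_X: "\<And>u. u < n \<Longrightarrow> (\<lambda>w. X w u) \<in> MW \<rightarrow>\<^sub>M T"
begin

abbreviation S :: "('w \<times> nat) measure" where
  "S \<equiv> MW \<Otimes>\<^sub>M uniform_count_measure {..<n}"

abbreviation index_space :: "nat measure" where
  "index_space \<equiv> count_space {..<n}"

abbreviation output_law :: "'t measure" where
  "output_law \<equiv> distr S T (case_prod X)"

abbreviation index_law :: "nat measure" where
  "index_law \<equiv> distr S index_space snd"

definition joint :: "('t \<times> nat) measure" where
  "joint = distr S (T \<Otimes>\<^sub>M index_space) (\<lambda>s. (case_prod X s, snd s))"

definition marginals :: "('t \<times> nat) measure" where
  "marginals = output_law \<Otimes>\<^sub>M index_law"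

sublocale W: prob_space MW by (rule prob_space_MW)

sublocale S: prob_space S
  using n_pos by (intro prob_space_pair W.prob_space_axioms prob_space_uniform_count_measure) auto

lemma measurable_X_S [measurable]: "case_prod X \<in> S \<rightarrow>\<^sub>M T"
  using measurable_X by (intro measurable_pair_uniform_count_measure) auto

lemma measurable_snd_S [measurable]: "snd \<in> S \<rightarrow>\<^sub>M index_space"
  by (intro measurable_pair_uniform_count_measure) auto

sublocale output_law: prob_space output_law by (rule S.prob_space_distr) simp
sublocale index_law: prob_space index_law by (rule S.prob_space_distr) simp
sublocale laws: pair_prob_space output_law index_law ..

lemma prob_space_joint: "prob_space joint"
  unfolding joint_def by (rule S.prob_space_distr) simp

lemma prob_space_marginals: "prob_space marginals"
  unfolding marginals_def by (rule laws.prob_space_axioms)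

lemma sets_marginals: "sets marginals = sets (T \<Otimes>\<^sub>M index_space)"
  unfolding marginals_def by (intro sets_pair_measure_cong) simp_all

lemma sets_joint: "sets joint = sets marginals"
  unfolding sets_marginals by (simp add: joint_def)

lemma mutual_information_eq_KL:
  "S.mutual_information (exp 1) T index_space (case_prod X) snd = KL_divergence (exp 1) marginals joint"
  unfolding S.mutual_information_def joint_def marginals_def ..

lemma nn_integral_index_law: "(\<integral>\<^sup>+u. f u \<partial>index_law) = (\<Sum>u<n. ennreal (1 / n) * f u)"
proof -
  have "(\<lambda>s. f (snd s)) \<in> borel_measurable S"
    by (rule measurable_compose[OF measurable_snd_S]) simp
  then show ?thesis
    using nn_integral_pair_uniform_count_measure[OF prob_space_MW n_pos, of "\<lambda>s. f (snd s)"]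
    by (simp add: nn_integral_distr W.emeasure_space_1)
qed

\<comment> \<open>With \<open>A\<^sub>u\<close> the section of \<open>A\<close> at \<open>u\<close> and \<open>U\<close> uniform:
  \<open>joint A = \<Sum>\<^sub>u P(X\<^sub>U \<in> A\<^sub>u, U = u) \<le> \<Sum>\<^sub>u P(X\<^sub>U \<in> A\<^sub>u) = n * marginals A\<close>.\<close>
lemma joint_dominated:
  assumes A: "A \<in> sets marginals"
  shows "emeasure joint A \<le> ennreal n * emeasure marginals A"
proof -
  have A'[measurable]: "A \<in> sets (T \<Otimes>\<^sub>M index_space)" using A sets_marginals by simp
  have [measurable]: "(\<lambda>t. indicator A (t, u) :: ennreal) \<in> borel_measurable T" if "u < n" for u
    by measurable (use that in simp)
  have "emeasure joint A = (\<integral>\<^sup>+x. indicator A x \<partial>joint)"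
    using A sets_joint by simp
  also have "\<dots> = (\<integral>\<^sup>+s. indicator A (case_prod X s, snd s) \<partial>S)"
    unfolding joint_def by (rule nn_integral_distr) simp_all
  finally have "ennreal (1 / n) * emeasure joint A
      = (\<integral>\<^sup>+s. ennreal (1 / n) * indicator A (case_prod X s, snd s) \<partial>S)"
    by (simp add: nn_integral_cmult)
  also have "\<dots> \<le> (\<integral>\<^sup>+s. (\<Sum>u<n. ennreal (1 / n) * indicator A (case_prod X s, u)) \<partial>S)"
  proof (intro nn_integral_mono)
    fix s assume "s \<in> space S"
    then have "snd s \<in> {..<n}" by (auto simp: space_pair_measure space_uniform_count_measure)
    then show "ennreal (1 / n) * indicator A (case_prod X s, snd s)
        \<le> (\<Sum>u<n. ennreal (1 / n) * indicator A (case_prod X s, u))"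
      by (intro member_le_sum) auto
  qed
  also have "\<dots> = (\<integral>\<^sup>+t. (\<Sum>u<n. ennreal (1 / n) * indicator A (t, u)) \<partial>output_law)"
    by (rule nn_integral_distr[symmetric]) simp_all
  also have "\<dots> = (\<integral>\<^sup>+t. (\<integral>\<^sup>+u. indicator A (t, u) \<partial>index_law) \<partial>output_law)"
    by (simp only: nn_integral_index_law)
  also have "\<dots> = (\<integral>\<^sup>+x. indicator A x \<partial>marginals)"
    unfolding marginals_def by (rule index_law.nn_integral_fst) (use A' in simp)
  also have "\<dots> = emeasure marginals A"
    using A by simp
  finally have "ennreal n * (ennreal (1 / n) * emeasure joint A) \<le> ennreal n * emeasure marginals A"
    by (rule mult_left_mono) simp
  moreover have "ennreal n * ennreal (1 / n) = 1"
    using n_pos by (simp flip: ennreal_mult)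
  ultimately show ?thesis by (simp add: mult.assoc[symmetric])
qed

context
  fixes a :: "'t \<Rightarrow> nat \<Rightarrow> real"
  assumes a_meas: "\<And>u. u < n \<Longrightarrow> (\<lambda>t. a t u) \<in> borel_measurable T"
    and a_bound: "\<And>t u. \<bar>a t u\<bar> \<le> 1"
begin

lemma measurable_case_prod_a [measurable]: "case_prod a \<in> borel_measurable (T \<Otimes>\<^sub>M index_space)"
  using a_meas by (intro measurable_pair_uniform_count_measure) auto

lemma abs_average_a_le: "\<bar>(\<Sum>u<n. a t u) / n\<bar> \<le> 1"
proof -
  have "\<bar>\<Sum>u<n. a t u\<bar> \<le> (\<Sum>u<n. 1)"
    using a_bound by (intro order.trans[OF sum_abs] sum_mono) auto
  then show ?thesis using n_pos by (simp add: divide_le_eq)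
qed

lemma integral_joint: "(\<integral>x. case_prod a x \<partial>joint) = (\<Sum>u<n. \<integral>w. a (X w u) u \<partial>MW) / n"
proof -
  have "(\<integral>x. case_prod a x \<partial>joint) = (\<integral>s. a (case_prod X s) (snd s) \<partial>S)"
    unfolding joint_def by (subst integral_distr) simp_all
  also have "\<dots> = (\<Sum>u<n. \<integral>w. a (X w u) u \<partial>MW) / n"
    using a_bound measurable_compose[OF measurable_X a_meas]
    by (subst integral_pair_uniform_count_measure[OF prob_space_MW n_pos, where B=1]) auto
  finally show ?thesis .
qed

lemma integral_marginals:
  "(\<integral>x. case_prod a x \<partial>marginals) = (\<Sum>v<n. \<integral>w. (\<Sum>u<n. a (X w v) u) / n \<partial>MW) / n"
proof -
  have average_meas: "(\<lambda>t. (\<Sum>u<n. a t u) / n) \<in> borel_measurable T"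
    using a_meas by measurable
  have inner: "(\<integral>u. a t u \<partial>index_law) = (\<Sum>u<n. a t u) / n" for t
  proof -
    have "(\<integral>u. a t u \<partial>index_law) = (\<integral>s. a t (snd s) \<partial>S)"
      by (subst integral_distr) simp_all
    also have "\<dots> = (\<Sum>u<n. a t u) / n"
      using a_bound
      by (subst integral_pair_uniform_count_measure[OF prob_space_MW n_pos, where B=1])
        (auto simp: W.prob_space)
    finally show ?thesis .
  qed
  have "integrable marginals (case_prod a)"
    using a_bound
    by (intro finite_measure.integrable_bounded[where B=1] prob_space.finite_measure prob_space_marginals)
      (auto simp: measurable_cong_sets[OF sets_marginals])
  then have "(\<integral>x. case_prod a x \<partial>marginals) = (\<integral>t. (\<Sum>u<n. a t u) / n \<partial>output_law)"
    unfolding marginals_def by (simp flip: laws.integral_fst' add: inner)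
  also have "\<dots> = (\<integral>s. (\<Sum>u<n. a (case_prod X s) u) / n \<partial>S)"
    using average_meas by (subst integral_distr) simp_all
  also have "\<dots> = (\<Sum>v<n. \<integral>w. (\<Sum>u<n. a (X w v) u) / n \<partial>MW) / n"
    using abs_average_a_le measurable_compose[OF measurable_X average_meas]
    by (subst integral_pair_uniform_count_measure[OF prob_space_MW n_pos, where B=1]) auto
  finally show ?thesis .
qed

lemma leave_one_out_information_bound:
  assumes "\<And>t u. 0 \<le> a t u"
  shows "\<bar>(\<Sum>u<n. \<integral>w. a (X w u) u \<partial>MW) / n - (\<Sum>v<n. \<integral>w. (\<Sum>u<n. a (X w v) u) / n \<partial>MW) / n\<bar>
    \<le> sqrt (S.mutual_information (exp 1) T index_space (case_prod X) snd / 2)"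
proof -
  interpret marginals: prob_space marginals by (rule prob_space_marginals)
  have "\<bar>(\<integral>x. case_prod a x \<partial>joint) - (\<integral>x. case_prod a x \<partial>marginals)\<bar>
      \<le> sqrt (KL_divergence (exp 1) marginals joint / 2)"
    using assms a_bound
    by (intro marginals.pinsker_dominated[OF prob_space_joint sets_joint joint_dominated])
      (auto simp: measurable_cong_sets[OF sets_marginals] abs_le_iff)
  then show ?thesis by (simp only: integral_joint integral_marginals mutual_information_eq_KL)
qed

end

lemma abs_mutual_information_le:
  "\<bar>S.mutual_information (exp 1) T index_space (case_prod X) snd\<bar> \<le> 1 + real n * real n"
proof -
  interpret marginals: prob_space marginals by (rule prob_space_marginals)
  show ?thesis unfolding mutual_information_eq_KL
    by (rule marginals.abs_KL_divergence_dominated_le[OF prob_space_joint sets_joint joint_dominated]) auto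
qed

end

section \<open>Deleting one sample\<close>

definition skip_index :: "nat \<Rightarrow> nat \<Rightarrow> nat" where
  "skip_index u i = (if i < u then i else Suc i)"

lemma del_idx_eq_restrict: "del_idx n u z = (\<lambda>i\<in>{..<n-1}. z (skip_index u i))"
  by (auto simp: del_idx_def skip_index_def)

lemma skip_index_neq [simp]: "skip_index u i \<noteq> u"
  by (simp add: skip_index_def)

lemma bij_betw_skip_index:
  assumes "u < n"
  shows "bij_betw (skip_index u) {..<n-1} ({..<n} - {u})"
proof (rule bij_betw_imageI)
  show "inj_on (skip_index u) {..<n-1}"
    by (auto simp: inj_on_def skip_index_def split: if_splits)
  show "skip_index u ` {..<n-1} = {..<n} - {u}"
  proof
    show "skip_index u ` {..<n-1} \<subseteq> {..<n} - {u}" using assms by (auto simp: skip_index_def)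
  next
    show "{..<n} - {u} \<subseteq> skip_index u ` {..<n-1}"
    proof
      fix j assume j: "j \<in> {..<n} - {u}"
      show "j \<in> skip_index u ` {..<n-1}"
      proof (cases "j < u")
        case True
        then show ?thesis using assms by (intro image_eqI[of _ _ j]) (auto simp: skip_index_def)
      next
        case False
        then show ?thesis using j by (intro image_eqI[of _ _ "j - 1"]) (auto simp: skip_index_def)
      qed
    qed
  qed
qed

lemma sum_skip_index:
  fixes f :: "nat \<Rightarrow> 'a::ab_group_add"
  assumes "u < n"
  shows "(\<Sum>i<n-1. f (skip_index u i)) = (\<Sum>j<n. f j) - f u"
  using sum.reindex_bij_betw[OF bij_betw_skip_index[OF assms], of f] assms
  by (simp add: sum_diff1)

lemma measurable_del_idx [measurable]:
  assumes "u < n"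
  shows "del_idx n u \<in> PiM {..<n} (\<lambda>_. M) \<rightarrow>\<^sub>M PiM {..<n-1} (\<lambda>_. M)"
  unfolding del_idx_eq_restrict[abs_def] using bij_betw_skip_index[OF assms]
  by (intro measurable_restrict measurable_component_singleton) (auto simp: bij_betw_def)

lemma measurable_del_idx_component:
  assumes "u < n"
  shows "(\<lambda>z. (del_idx n u z, z u)) \<in> PiM {..<n} (\<lambda>_. M) \<rightarrow>\<^sub>M PiM {..<n-1} (\<lambda>_. M) \<Otimes>\<^sub>M M"
  using assms by (intro measurable_Pair measurable_del_idx measurable_component_singleton) auto

lemma distr_PiM_del_idx:
  fixes P :: "'a measure"
  assumes P: "prob_space P" and u: "u < n"
  shows "distr (PiM {..<n} (\<lambda>_. P)) (PiM {..<n-1} (\<lambda>_. P) \<Otimes>\<^sub>M P) (\<lambda>z. (del_idx n u z, z u))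
    = PiM {..<n-1} (\<lambda>_. P) \<Otimes>\<^sub>M P"
proof -
  interpret prob_P: prob_space P by fact
  define I where "I = {..<n} - {u}"
  have insert_I: "insert u I = {..<n}" using u by (auto simp: I_def)
  have skip: "bij_betw (skip_index u) {..<n-1} I" unfolding I_def by (rule bij_betw_skip_index[OF u])
  then have skip_into: "skip_index u \<in> {..<n-1} \<rightarrow> I" by (auto simp: bij_betw_def)
  define restrict_skip where "restrict_skip = (\<lambda>z :: nat \<Rightarrow> 'a. \<lambda>i\<in>{..<n-1}. z (skip_index u i))"
  define upd where "upd = (\<lambda>(x :: 'a, z). z(u := x))"
  interpret PI: prob_space "PiM I (\<lambda>_. P)" by (intro prob_space_PiM P)
  interpret swapped: pair_prob_space "PiM I (\<lambda>_. P)" P ..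
  \<comment> \<open>\<open>P\<^sup>n\<close> is the law of \<open>z(u := x)\<close> for independent \<open>x \<sim> P\<close> and \<open>z \<sim> P\<^sup>I\<close>, so deleting index \<open>u\<close>
    recovers the pair \<open>(z, x)\<close>, up to re-indexing \<open>I\<close> by \<open>{..<n-1}\<close>.\<close>
  have upd_distr: "distr (P \<Otimes>\<^sub>M PiM I (\<lambda>_. P)) (PiM {..<n} (\<lambda>_. P)) upd = PiM {..<n} (\<lambda>_. P)"
    using distr_pair_PiM_eq_PiM[of I "\<lambda>_. P" u] P unfolding upd_def insert_I by simp
  have upd_meas: "upd \<in> P \<Otimes>\<^sub>M PiM I (\<lambda>_. P) \<rightarrow>\<^sub>M PiM {..<n} (\<lambda>_. P)"
    unfolding upd_def
    using measurable_fun_upd[where I="{..<n}" and J=I and i=u and M="\<lambda>_. P"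
        and N="P \<Otimes>\<^sub>M PiM I (\<lambda>_. P)" and f=snd and h=fst] insert_I
    by (simp add: case_prod_beta' Un_commute)
  have restrict_meas: "restrict_skip \<in> PiM I (\<lambda>_. P) \<rightarrow>\<^sub>M PiM {..<n-1} (\<lambda>_. P)"
    unfolding restrict_skip_def
    by (intro measurable_restrict measurable_component_singleton) (use skip_into in auto)
  have restrict_distr: "distr (PiM I (\<lambda>_. P)) (PiM {..<n-1} (\<lambda>_. P)) restrict_skip = PiM {..<n-1} (\<lambda>_. P)"
    unfolding restrict_skip_def
    using distr_PiM_reindex[of I "\<lambda>_. P" "skip_index u" "{..<n-1}"] P skip skip_into
    unfolding bij_betw_def by simp
  have "distr (PiM {..<n} (\<lambda>_. P)) (PiM {..<n-1} (\<lambda>_. P) \<Otimes>\<^sub>M P) (\<lambda>z. (del_idx n u z, z u))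
      = distr (P \<Otimes>\<^sub>M PiM I (\<lambda>_. P)) (PiM {..<n-1} (\<lambda>_. P) \<Otimes>\<^sub>M P) ((\<lambda>z. (del_idx n u z, z u)) \<circ> upd)"
    by (subst upd_distr[symmetric]) (rule distr_distr[OF measurable_del_idx_component[OF u] upd_meas])
  also have "\<dots> = distr (P \<Otimes>\<^sub>M PiM I (\<lambda>_. P)) (PiM {..<n-1} (\<lambda>_. P) \<Otimes>\<^sub>M P)
      ((\<lambda>(z, x). (restrict_skip z, x)) \<circ> (\<lambda>(x, z). (z, x)))"
    by (rule distr_cong) (auto simp: upd_def restrict_skip_def del_idx_eq_restrict)
  also have "\<dots> = distr (distr (P \<Otimes>\<^sub>M PiM I (\<lambda>_. P)) (PiM I (\<lambda>_. P) \<Otimes>\<^sub>M P) (\<lambda>(x, z). (z, x)))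
      (PiM {..<n-1} (\<lambda>_. P) \<Otimes>\<^sub>M P) (\<lambda>(z, x). (restrict_skip z, x))"
    by (rule distr_distr[symmetric]) (use restrict_meas in auto)
  also have "distr (P \<Otimes>\<^sub>M PiM I (\<lambda>_. P)) (PiM I (\<lambda>_. P) \<Otimes>\<^sub>M P) (\<lambda>(x, z). (z, x)) = PiM I (\<lambda>_. P) \<Otimes>\<^sub>M P"
    by (rule swapped.distr_pair_swap[symmetric])
  also have "distr (PiM I (\<lambda>_. P) \<Otimes>\<^sub>M P) (PiM {..<n-1} (\<lambda>_. P) \<Otimes>\<^sub>M P) (\<lambda>(z, x). (restrict_skip z, x))
      = distr (PiM I (\<lambda>_. P)) (PiM {..<n-1} (\<lambda>_. P)) restrict_skip \<Otimes>\<^sub>M distr P P (\<lambda>x. x)"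
    by (rule pair_measure_distr[symmetric]) (use restrict_meas in \<open>auto intro: prob_P.sigma_finite_measure_axioms\<close>)
  finally show ?thesis using restrict_distr by simp
qed

lemma integral_PiM_del_idx:
  fixes \<psi> :: "(nat \<Rightarrow> 'a) \<times> 'a \<Rightarrow> real"
  assumes P: "prob_space P" and u: "u < n"
    and \<psi>_meas: "\<psi> \<in> borel_measurable (PiM {..<n-1} (\<lambda>_. P) \<Otimes>\<^sub>M P)"
    and \<psi>_bound: "\<And>q. \<bar>\<psi> q\<bar> \<le> B"
  shows "(\<integral>z. \<psi> (del_idx n u z, z u) \<partial>PiM {..<n} (\<lambda>_. P))
    = (\<integral>z'. (\<integral>p. \<psi> (z', p) \<partial>P) \<partial>PiM {..<n-1} (\<lambda>_. P))"
proof -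
  interpret prob_P: prob_space P by fact
  interpret PN1: prob_space "PiM {..<n-1} (\<lambda>_. P)" by (intro prob_space_PiM P)
  interpret pair: pair_prob_space "PiM {..<n-1} (\<lambda>_. P)" P ..
  have "(\<integral>z. \<psi> (del_idx n u z, z u) \<partial>PiM {..<n} (\<lambda>_. P))
      = (\<integral>q. \<psi> q \<partial>distr (PiM {..<n} (\<lambda>_. P)) (PiM {..<n-1} (\<lambda>_. P) \<Otimes>\<^sub>M P) (\<lambda>z. (del_idx n u z, z u)))"
    by (rule integral_distr[symmetric, OF measurable_del_idx_component[OF u] \<psi>_meas])
  also have "\<dots> = (\<integral>q. \<psi> q \<partial>(PiM {..<n-1} (\<lambda>_. P) \<Otimes>\<^sub>M P))"
    by (simp only: distr_PiM_del_idx[OF P u])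
  also have "\<dots> = (\<integral>z'. (\<integral>p. \<psi> (z', p) \<partial>P) \<partial>PiM {..<n-1} (\<lambda>_. P))"
    using \<psi>_meas \<psi>_bound by (intro pair.integral_fst'[symmetric] pair.P.integrable_bounded) auto
  finally show ?thesis .
qed

section \<open>Leave-one-out losses\<close>

locale leave_one_out_setting =
  fixes MW :: "'w measure" and MX :: "'x measure" and MY :: "'y measure"
    and MR :: "'r measure" and P :: "('x \<times> 'y) measure"
    and h :: "'w \<Rightarrow> (nat \<Rightarrow> 'x \<times> 'y) \<Rightarrow> 'x \<Rightarrow> 'r"
    and loss :: "'r \<Rightarrow> 'y \<Rightarrow> real" and n :: nat
  assumes n2: "n \<ge> 2"
    and PW: "prob_space MW"
    and PP: "prob_space P"
    and sets_P: "sets P = sets (MX \<Otimes>\<^sub>M MY)"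
    and h_meas: "(\<lambda>(w, z, x). h w z x) \<in> MW \<Otimes>\<^sub>M (PiM {..<n-1} (\<lambda>_. P) \<Otimes>\<^sub>M MX) \<rightarrow>\<^sub>M MR"
    and loss_meas: "(\<lambda>(r, y). loss r y) \<in> borel_measurable (MR \<Otimes>\<^sub>M MY)"
    and loss_range: "\<And>r y. 0 \<le> loss r y \<and> loss r y \<le> 1"
begin

abbreviation samples :: "(nat \<Rightarrow> 'x \<times> 'y) measure" where
  "samples \<equiv> PiM {..<n} (\<lambda>_. P)"

abbreviation train_samples :: "(nat \<Rightarrow> 'x \<times> 'y) measure" where
  "train_samples \<equiv> PiM {..<n-1} (\<lambda>_. P)"

sublocale W: prob_space MW by (rule PW)
sublocale prob_P: prob_space P by (rule PP)
sublocale samples: prob_space samples by (intro prob_space_PiM PP)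
sublocale train_samples: prob_space train_samples by (intro prob_space_PiM PP)

lemma measurable_fst_P: "fst \<in> P \<rightarrow>\<^sub>M MX" and measurable_snd_P: "snd \<in> P \<rightarrow>\<^sub>M MY"
  by (simp_all add: measurable_cong_sets[OF sets_P refl])

lemma measurable_h:
  assumes "A \<in> N \<rightarrow>\<^sub>M MW" "B \<in> N \<rightarrow>\<^sub>M train_samples" "C \<in> N \<rightarrow>\<^sub>M MX"
  shows "(\<lambda>s. h (A s) (B s) (C s)) \<in> N \<rightarrow>\<^sub>M MR"
  using measurable_compose[OF measurable_Pair[OF assms(1) measurable_Pair[OF assms(2,3)]] h_meas]
  by simp

lemma measurable_loss_h:
  assumes "A \<in> N \<rightarrow>\<^sub>M MW" "B \<in> N \<rightarrow>\<^sub>M train_samples" "E \<in> N \<rightarrow>\<^sub>M P"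
  shows "(\<lambda>s. loss (h (A s) (B s) (fst (E s))) (snd (E s))) \<in> borel_measurable N"
proof -
  have "(\<lambda>s. (h (A s) (B s) (fst (E s)), snd (E s))) \<in> N \<rightarrow>\<^sub>M MR \<Otimes>\<^sub>M MY"
    using assms measurable_fst_P measurable_snd_P
    by (intro measurable_Pair measurable_h measurable_compose[OF assms(3)])
  from measurable_compose[OF this loss_meas] show ?thesis by simp
qed

lemma measurable_emp_loss:
  assumes "A \<in> N \<rightarrow>\<^sub>M MW" "B \<in> N \<rightarrow>\<^sub>M train_samples"
  shows "(\<lambda>s. emp_loss loss h (n-1) (A s) (B s)) \<in> borel_measurable N"
  unfolding emp_loss_def
proof (intro borel_measurable_divide borel_measurable_sum)
  fix i assume "i \<in> {..<n-1}"
  then have "(\<lambda>s. B s i) \<in> N \<rightarrow>\<^sub>M P"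
    by (intro measurable_compose[OF assms(2) measurable_component_singleton]) auto
  then show "(\<lambda>s. loss (h (A s) (B s) (fst (B s i))) (snd (B s i))) \<in> borel_measurable N"
    by (rule measurable_loss_h[OF assms])
qed simp

lemma measurable_true_loss:
  assumes "A \<in> N \<rightarrow>\<^sub>M MW" "B \<in> N \<rightarrow>\<^sub>M train_samples"
  shows "(\<lambda>s. true_loss P loss h (A s) (B s)) \<in> borel_measurable N"
proof -
  have "(\<lambda>q. loss (h (A (fst q)) (B (fst q)) (fst (snd q))) (snd (snd q))) \<in> borel_measurable (N \<Otimes>\<^sub>M P)"
    using assms by (intro measurable_loss_h measurable_compose[OF measurable_fst]) auto
  then show ?thesis
    unfolding true_loss_def by (intro prob_P.borel_measurable_lebesgue_integral) (simp add: split_beta')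
qed

lemma abs_loss_le: "\<bar>loss r y\<bar> \<le> 1"
  using loss_range[of r y] by simp

lemma abs_emp_loss_le: "\<bar>emp_loss loss h (n-1) w z\<bar> \<le> 1"
proof -
  have "0 \<le> (\<Sum>i<n-1. loss (h w z (fst (z i))) (snd (z i)))"
    and "(\<Sum>i<n-1. loss (h w z (fst (z i))) (snd (z i))) \<le> (\<Sum>i<n-1. 1)"
    using loss_range by (intro sum_nonneg sum_mono; simp)+
  then show ?thesis unfolding emp_loss_def using n2 by (simp add: abs_le_iff)
qed

lemma abs_true_loss_le: "\<bar>true_loss P loss h w z\<bar> \<le> 1"
  unfolding true_loss_def by (intro prob_P.abs_integral_le abs_loss_le)

definition loo_loss :: "(nat \<Rightarrow> 'x \<times> 'y) \<Rightarrow> nat \<Rightarrow> 'w \<Rightarrow> nat \<Rightarrow> real" where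
  "loo_loss z v w u = loss (h w (del_idx n v z) (fst (z u))) (snd (z u))"

definition held_out_loss :: "(nat \<Rightarrow> 'x \<times> 'y) \<Rightarrow> nat \<Rightarrow> real" where
  "held_out_loss z v = (\<integral>w. loo_loss z v w v \<partial>MW)"

definition train_loss :: "(nat \<Rightarrow> 'x \<times> 'y) \<Rightarrow> nat \<Rightarrow> real" where
  "train_loss z v = (\<integral>w. emp_loss loss h (n-1) w (del_idx n v z) \<partial>MW)"

definition loo_gap :: "(nat \<Rightarrow> 'x \<times> 'y) \<Rightarrow> real" where
  "loo_gap z = (\<Sum>v<n. held_out_loss z v - train_loss z v) / n"

lemma space_samples_component: "z \<in> space samples \<Longrightarrow> u < n \<Longrightarrow> z u \<in> space P"
  by (auto simp: space_PiM)

lemma space_samples_del_idx: "z \<in> space samples \<Longrightarrow> v < n \<Longrightarrow> del_idx n v z \<in> space train_samples"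
  using measurable_space[OF measurable_del_idx] by blast

lemma measurable_loo_loss:
  assumes "z \<in> space samples" "v < n" "u < n"
  shows "(\<lambda>w. loo_loss z v w u) \<in> borel_measurable MW"
  unfolding loo_loss_def using assms
  by (intro measurable_loss_h measurable_const space_samples_component space_samples_del_idx) auto

lemma abs_loo_loss_le: "\<bar>loo_loss z v w u\<bar> \<le> 1"
  unfolding loo_loss_def by (rule abs_loss_le)

lemma emp_loss_del_idx:
  assumes "v < n"
  shows "emp_loss loss h (n-1) w (del_idx n v z) = ((\<Sum>u<n. loo_loss z v w u) - loo_loss z v w v) / real (n - 1)"
proof -
  have "(\<Sum>i<n-1. loss (h w (del_idx n v z) (fst (del_idx n v z i))) (snd (del_idx n v z i)))
      = (\<Sum>i<n-1. loo_loss z v w (skip_index v i))"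
    by (intro sum.cong) (auto simp: loo_loss_def del_idx_eq_restrict)
  then show ?thesis using sum_skip_index[OF assms] n2 by (simp add: emp_loss_def of_nat_diff)
qed

lemma train_loss_eq:
  assumes "z \<in> space samples" "v < n"
  shows "train_loss z v = ((\<integral>w. (\<Sum>u<n. loo_loss z v w u) \<partial>MW) - held_out_loss z v) / real (n - 1)"
proof -
  have int: "integrable MW (\<lambda>w. loo_loss z v w u)" if "u < n" for u
    using assms that by (intro W.integrable_bounded[where B=1] measurable_loo_loss abs_loo_loss_le)
  then have "integrable MW (\<lambda>w. \<Sum>u<n. loo_loss z v w u)" by auto
  then show ?thesis
    unfolding train_loss_def held_out_loss_def emp_loss_del_idx[OF assms(2)]
    using int[OF assms(2)] by simp
qed

lemma loo_gap_eq:
  assumes "z \<in> space samples"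
  shows "loo_gap z = real n / real (n - 1) *
    ((\<Sum>v<n. held_out_loss z v) / n - (\<Sum>v<n. \<integral>w. (\<Sum>u<n. loo_loss z v w u) / n \<partial>MW) / n)"
proof -
  define ST where "ST = (\<Sum>v<n. held_out_loss z v)"
  define SB where "SB = (\<Sum>v<n. \<integral>w. (\<Sum>u<n. loo_loss z v w u) \<partial>MW)"
  have "(\<Sum>v<n. held_out_loss z v - train_loss z v)
      = (\<Sum>v<n. held_out_loss z v - ((\<integral>w. (\<Sum>u<n. loo_loss z v w u) \<partial>MW) - held_out_loss z v) / real (n - 1))"
    using assms by (intro sum.cong) (simp_all add: train_loss_eq)
  also have "\<dots> = ST - (SB - ST) / real (n - 1)"
    unfolding ST_def SB_def using n2 by (simp add: sum_subtractf sum_divide_distrib[symmetric] of_nat_diff)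
  finally have "loo_gap z = (ST - (SB - ST) / real (n - 1)) / n" unfolding loo_gap_def by simp
  also have "\<dots> = n / real (n - 1) * (ST / n - (SB / n) / n)"
    using n2 by (simp add: field_simps of_nat_diff)
  moreover have "(\<Sum>v<n. \<integral>w. (\<Sum>u<n. loo_loss z v w u) / n \<partial>MW) = SB / n"
    unfolding SB_def by (simp only: integral_divide_zero sum_divide_distrib[symmetric])
  ultimately show ?thesis unfolding ST_def by simp
qed

lemma uniform_index_channel_predictions:
  assumes "z \<in> space samples"
  shows "uniform_index_channel MW (PiM {..<n} (\<lambda>_. MR)) n
    (\<lambda>w u. \<lambda>i\<in>{..<n}. h w (del_idx n u z) (fst (z i)))"
proof
  fix u assume "u < n"
  then show "(\<lambda>w. \<lambda>i\<in>{..<n}. h w (del_idx n u z) (fst (z i))) \<in> MW \<rightarrow>\<^sub>M PiM {..<n} (\<lambda>_. MR)"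
    using assms measurable_fst_P
    by (intro measurable_restrict measurable_h measurable_const space_samples_del_idx
        measurable_space[of fst P MX] space_samples_component) auto
qed (use PW n2 in auto)

lemma abs_floo_CMI_le:
  assumes "z \<in> space samples"
  shows "\<bar>floo_CMI MW MR h n z\<bar> \<le> 1 + real n * real n"
  using uniform_index_channel.abs_mutual_information_le[OF uniform_index_channel_predictions[OF assms]]
  unfolding floo_CMI_def by simp

lemma abs_loo_gap_le:
  assumes z: "z \<in> space samples"
  shows "\<bar>loo_gap z\<bar> \<le> real n / real (n - 1) / sqrt 2 * sqrt (floo_CMI MW MR h n z)"
proof -
  interpret channel: uniform_index_channel MW "PiM {..<n} (\<lambda>_. MR)" n
    "\<lambda>w u. \<lambda>i\<in>{..<n}. h w (del_idx n u z) (fst (z i))"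
    by (rule uniform_index_channel_predictions[OF z])
  define a where "a F u = loss (F u) (snd (z u))" for F :: "nat \<Rightarrow> 'r" and u
  have a_meas: "(\<lambda>F. a F u) \<in> borel_measurable (PiM {..<n} (\<lambda>_. MR))" if "u < n" for u
  proof -
    have "snd (z u) \<in> space MY"
      by (rule measurable_space[OF measurable_snd_P space_samples_component[OF z that]])
    then have "(\<lambda>F. (F u, snd (z u))) \<in> PiM {..<n} (\<lambda>_. MR) \<rightarrow>\<^sub>M MR \<Otimes>\<^sub>M MY"
      using that by (intro measurable_Pair measurable_component_singleton measurable_const) auto
    from measurable_compose[OF this loss_meas] show ?thesis by (simp only: a_def prod.case)
  qed
  have held_out: "(\<Sum>u<n. \<integral>w. a (\<lambda>i\<in>{..<n}. h w (del_idx n u z) (fst (z i))) u \<partial>MW)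
      = (\<Sum>v<n. held_out_loss z v)"
    by (intro sum.cong) (auto simp: a_def held_out_loss_def loo_loss_def)
  have all: "(\<Sum>v<n. \<integral>w. (\<Sum>u<n. a (\<lambda>i\<in>{..<n}. h w (del_idx n v z) (fst (z i))) u) / n \<partial>MW)
      = (\<Sum>v<n. \<integral>w. (\<Sum>u<n. loo_loss z v w u) / n \<partial>MW)"
    by (intro sum.cong Bochner_Integration.integral_cong arg_cong2[where f="(/)"]) (auto simp: a_def loo_loss_def)
  have "\<bar>(\<Sum>v<n. held_out_loss z v) / n - (\<Sum>v<n. \<integral>w. (\<Sum>u<n. loo_loss z v w u) / n \<partial>MW) / n\<bar>
    \<le> sqrt (floo_CMI MW MR h n z / 2)"
    unfolding floo_CMI_def held_out[symmetric] all[symmetric]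
    by (rule channel.leave_one_out_information_bound[OF a_meas])
      (use loss_range in \<open>auto simp: a_def abs_le_iff\<close>)
  then have "\<bar>loo_gap z\<bar> \<le> real n / real (n - 1) * sqrt (floo_CMI MW MR h n z / 2)"
    unfolding loo_gap_eq[OF z] abs_mult abs_divide abs_of_nat by (rule mult_left_mono) auto
  then show ?thesis by (simp add: real_sqrt_divide)
qed

lemma measurable_held_out_loss:
  assumes "v < n"
  shows "(\<lambda>z. held_out_loss z v) \<in> borel_measurable samples"
proof -
  have "(\<lambda>q. loss (h (snd q) (del_idx n v (fst q)) (fst (fst q v))) (snd (fst q v)))
      \<in> borel_measurable (samples \<Otimes>\<^sub>M MW)"
    using assms
    by (intro measurable_loss_h measurable_snd measurable_compose[OF measurable_fst]
        measurable_del_idx measurable_component_singleton) auto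
  then show ?thesis
    unfolding held_out_loss_def loo_loss_def
    by (intro W.borel_measurable_lebesgue_integral) (simp add: split_beta')
qed

lemma measurable_train_loss:
  assumes "v < n"
  shows "(\<lambda>z. train_loss z v) \<in> borel_measurable samples"
proof -
  have "(\<lambda>q. emp_loss loss h (n-1) (snd q) (del_idx n v (fst q))) \<in> borel_measurable (samples \<Otimes>\<^sub>M MW)"
    using assms by (intro measurable_emp_loss measurable_snd measurable_compose[OF measurable_fst]
        measurable_del_idx)
  then show ?thesis
    unfolding train_loss_def by (intro W.borel_measurable_lebesgue_integral) (simp add: split_beta')
qed

lemma abs_held_out_loss_le: "\<bar>held_out_loss z v\<bar> \<le> 1"
  unfolding held_out_loss_def by (intro W.abs_integral_le abs_loo_loss_le)

lemma abs_train_loss_le: "\<bar>train_loss z v\<bar> \<le> 1"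
  unfolding train_loss_def by (intro W.abs_integral_le abs_emp_loss_le)

lemma finite_measure_W_train: "finite_measure (MW \<Otimes>\<^sub>M train_samples)"
  by (intro prob_space.finite_measure prob_space_pair PW train_samples.prob_space_axioms)

lemma integrable_true_loss: "integrable (MW \<Otimes>\<^sub>M train_samples) (\<lambda>s. true_loss P loss h (fst s) (snd s))"
  by (intro finite_measure.integrable_bounded[OF finite_measure_W_train, where B=1] abs_true_loss_le
      measurable_true_loss measurable_fst measurable_snd)

lemma integrable_emp_loss: "integrable (MW \<Otimes>\<^sub>M train_samples) (\<lambda>s. emp_loss loss h (n-1) (fst s) (snd s))"
  by (intro finite_measure.integrable_bounded[OF finite_measure_W_train, where B=1] abs_emp_loss_le
      measurable_emp_loss measurable_fst measurable_snd)

lemma integral_held_out_loss: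
  assumes v: "v < n"
  shows "(\<integral>z. held_out_loss z v \<partial>samples)
    = (\<integral>s. true_loss P loss h (fst s) (snd s) \<partial>(MW \<Otimes>\<^sub>M train_samples))"
proof -
  interpret W_train: pair_prob_space MW train_samples ..
  interpret W_P: pair_prob_space MW P ..
  define \<psi> where "\<psi> q = (\<integral>w. loss (h w (fst q) (fst (snd q))) (snd (snd q)) \<partial>MW)" for q
  have "(\<lambda>q. loss (h (snd q) (fst (fst q)) (fst (snd (fst q)))) (snd (snd (fst q))))
      \<in> borel_measurable ((train_samples \<Otimes>\<^sub>M P) \<Otimes>\<^sub>M MW)"
    by (intro measurable_loss_h measurable_snd measurable_compose[OF measurable_fst]) simp_all
  then have \<psi>_meas: "\<psi> \<in> borel_measurable (train_samples \<Otimes>\<^sub>M P)"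
    unfolding \<psi>_def by (intro W.borel_measurable_lebesgue_integral) (simp add: split_beta')
  have inner: "(\<integral>p. \<psi> (z', p) \<partial>P) = (\<integral>w. true_loss P loss h w z' \<partial>MW)" if "z' \<in> space train_samples" for z'
  proof -
    have "(\<lambda>q. loss (h (fst q) z' (fst (snd q))) (snd (snd q))) \<in> borel_measurable (MW \<Otimes>\<^sub>M P)"
      using that by (intro measurable_loss_h measurable_fst measurable_const measurable_snd)
    then have "integrable (MW \<Otimes>\<^sub>M P) (\<lambda>(w, p). loss (h w z' (fst p)) (snd p))"
      by (intro W_P.P.integrable_bounded[where B=1]) (auto simp: split_beta' abs_loss_le)
    then show ?thesis
      unfolding \<psi>_def true_loss_def fst_conv snd_conv by (rule W_P.Fubini_integral)
  qed
  have "(\<integral>z. held_out_loss z v \<partial>samples) = (\<integral>z. \<psi> (del_idx n v z, z v) \<partial>samples)"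
    by (simp add: held_out_loss_def loo_loss_def \<psi>_def)
  also have "\<dots> = (\<integral>z'. (\<integral>p. \<psi> (z', p) \<partial>P) \<partial>train_samples)"
    unfolding \<psi>_def by (intro integral_PiM_del_idx[OF PP v \<psi>_meas[unfolded \<psi>_def], where B=1] W.abs_integral_le abs_loss_le)
  also have "\<dots> = (\<integral>z'. (\<integral>w. true_loss P loss h w z' \<partial>MW) \<partial>train_samples)"
    by (intro Bochner_Integration.integral_cong inner refl)
  also have "\<dots> = (\<integral>s. true_loss P loss h (fst s) (snd s) \<partial>(MW \<Otimes>\<^sub>M train_samples))"
    using W_train.integral_snd[of "true_loss P loss h"] integrable_true_loss by (simp add: split_beta')
  finally show ?thesis .
qed

lemma integral_train_loss:
  assumes v: "v < n"
  shows "(\<integral>z. train_loss z v \<partial>samples)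
    = (\<integral>s. emp_loss loss h (n-1) (fst s) (snd s) \<partial>(MW \<Otimes>\<^sub>M train_samples))"
proof -
  interpret W_train: pair_prob_space MW train_samples ..
  define \<psi> where "\<psi> q = (\<integral>w. emp_loss loss h (n-1) w (fst q) \<partial>MW)" for q :: "(nat \<Rightarrow> 'x \<times> 'y) \<times> 'x \<times> 'y"
  have "(\<lambda>q. emp_loss loss h (n-1) (snd q) (fst (fst q))) \<in> borel_measurable ((train_samples \<Otimes>\<^sub>M P) \<Otimes>\<^sub>M MW)"
    by (intro measurable_emp_loss measurable_snd measurable_compose[OF measurable_fst]) simp
  then have \<psi>_meas: "\<psi> \<in> borel_measurable (train_samples \<Otimes>\<^sub>M P)"
    unfolding \<psi>_def by (intro W.borel_measurable_lebesgue_integral) (simp add: split_beta')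
  have "(\<integral>z. train_loss z v \<partial>samples) = (\<integral>z. \<psi> (del_idx n v z, z v) \<partial>samples)"
    by (simp add: train_loss_def \<psi>_def)
  also have "\<dots> = (\<integral>z'. (\<integral>p. \<psi> (z', p) \<partial>P) \<partial>train_samples)"
    unfolding \<psi>_def by (intro integral_PiM_del_idx[OF PP v \<psi>_meas[unfolded \<psi>_def], where B=1] W.abs_integral_le abs_emp_loss_le)
  also have "\<dots> = (\<integral>z'. (\<integral>w. emp_loss loss h (n-1) w z' \<partial>MW) \<partial>train_samples)"
    by (simp add: \<psi>_def prob_P.prob_space)
  also have "\<dots> = (\<integral>s. emp_loss loss h (n-1) (fst s) (snd s) \<partial>(MW \<Otimes>\<^sub>M train_samples))"
    using W_train.integral_snd[of "emp_loss loss h (n-1)"] integrable_emp_loss by (simp add: split_beta')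
  finally show ?thesis .
qed

lemma integrable_held_out_loss: "v < n \<Longrightarrow> integrable samples (\<lambda>z. held_out_loss z v)"
  by (intro samples.integrable_bounded[where B=1] measurable_held_out_loss abs_held_out_loss_le)

lemma integrable_train_loss: "v < n \<Longrightarrow> integrable samples (\<lambda>z. train_loss z v)"
  by (intro samples.integrable_bounded[where B=1] measurable_train_loss abs_train_loss_le)

lemma integrable_loo_gap: "integrable samples loo_gap"
  unfolding loo_gap_def[abs_def]
  by (intro integrable_divide Bochner_Integration.integrable_sum Bochner_Integration.integrable_diff
      integrable_held_out_loss integrable_train_loss) simp_all

lemma gen_gap_eq_abs_integral_loo_gap: "gen_gap MW P loss h (n - 1) = \<bar>\<integral>z. loo_gap z \<partial>samples\<bar>"
proof -
  have "(\<integral>z. loo_gap z \<partial>samples) = (\<Sum>v<n. (\<integral>z. held_out_loss z v \<partial>samples) - (\<integral>z. train_loss z v \<partial>samples)) / n"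
    unfolding loo_gap_def using integrable_held_out_loss integrable_train_loss
    by (simp add: Bochner_Integration.integral_sum)
  also have "\<dots> = (\<integral>s. true_loss P loss h (fst s) (snd s) \<partial>(MW \<Otimes>\<^sub>M train_samples))
      - (\<integral>s. emp_loss loss h (n-1) (fst s) (snd s) \<partial>(MW \<Otimes>\<^sub>M train_samples))"
    using n2 by (simp add: integral_held_out_loss integral_train_loss)
  finally show ?thesis
    unfolding gen_gap_def split_beta'
      Bochner_Integration.integral_diff[OF integrable_emp_loss integrable_true_loss]
    by (simp add: abs_minus_commute)
qed

end

theorem theorem2:
  fixes MW :: "'w measure" and MX :: "'x measure" and MY :: "'y measure"
    and MR :: "'r measure" and P :: "('x \<times> 'y) measure"
    and h :: "'w \<Rightarrow> (nat \<Rightarrow> 'x \<times> 'y) \<Rightarrow> 'x \<Rightarrow> 'r"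
    and loss :: "'r \<Rightarrow> 'y \<Rightarrow> real" and n :: nat
  assumes n2: "n \<ge> 2"
    and PW: "prob_space MW"
    and PP: "prob_space P"
    and sets_P: "sets P = sets (MX \<Otimes>\<^sub>M MY)"
    and h_meas: "(\<lambda>(w, z, x). h w z x) \<in> MW \<Otimes>\<^sub>M (PiM {..<n-1} (\<lambda>_. P) \<Otimes>\<^sub>M MX) \<rightarrow>\<^sub>M MR"
    and loss_meas: "(\<lambda>(r, y). loss r y) \<in> borel_measurable (MR \<Otimes>\<^sub>M MY)"
    and loss_range: "\<And>r y. 0 \<le> loss r y \<and> loss r y \<le> 1"
    and cmi_meas: "floo_CMI MW MR h n \<in> borel_measurable (PiM {..<n} (\<lambda>_. P))"
  shows "gen_gap MW P loss h (n - 1)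
           \<le> (real n / real (n - 1)) / sqrt 2 *
             (\<integral>z. sqrt (floo_CMI MW MR h n z) \<partial>(PiM {..<n} (\<lambda>_. P)))"
proof -
  interpret leave_one_out_setting MW MX MY MR P h loss n
    by (rule leave_one_out_setting.intro[OF n2 PW PP sets_P h_meas loss_meas loss_range])
  \<comment> \<open>Without integrability the right-hand integral would be the junk value \<open>0\<close>.\<close>
  have integrable_sqrt_CMI: "integrable samples (\<lambda>z. sqrt (floo_CMI MW MR h n z))"
    using cmi_meas abs_floo_CMI_le
    by (intro samples.integrable_bounded[where B="sqrt (1 + real n * real n)"])
      (auto simp flip: real_sqrt_abs2 intro: real_sqrt_le_mono)
  have "gen_gap MW P loss h (n - 1) = \<bar>\<integral>z. loo_gap z \<partial>samples\<bar>"
    by (rule gen_gap_eq_abs_integral_loo_gap)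
  also have "\<dots> \<le> (\<integral>z. \<bar>loo_gap z\<bar> \<partial>samples)"
    by (rule integral_abs_bound)
  also have "\<dots> \<le> (\<integral>z. real n / real (n - 1) / sqrt 2 * sqrt (floo_CMI MW MR h n z) \<partial>samples)"
    using integrable_loo_gap integrable_sqrt_CMI abs_loo_gap_le by (intro integral_mono) auto
  finally show ?thesis by simp
qed

end
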